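(* Let $n=n_1\cdots n_\ell>2$ with integers $n_i\ge2$ and $U=F_{(n_1,\dots,n_\ell)}$ (modes labelled as in the context). Let $\lambda\in[0,1]$ and $\Lambda=1-(1-\lambda)^{\log_2 n}$. In the lossy distillation protocol with input $\rho^{(n)}(\epsilon)$, the heralding rate satisfies $$h_n(\epsilon;\lambda)\ge(1-\Lambda)^{n-1}h_n(\epsilon)=(1-\lambda)^{(n-1)\log_2 n}\,h_n(\epsilon),$$ and for $\epsilon=0$ equality holds: $h_n(0;\lambda)=(1-\Lambda)^{n-1}h_n(0)=(1-\lambda)^{(n-1)\log_2n}h_n(0)$.
   Context: $F_m=\frac1{\sqrt m}(e^{2\pi ijk/m})_{j,k}$, $F_{(n_1,\dots,n_\ell)}=F_{n_1}\otimes\cdots\otimes F_{n_\ell}$, with $|m_1\rangle\otimes\cdots\otimes|m_\ell\rangle$ labelled as mode $m_1+n_1m_2+\cdots+(n_1\cdots n_{\ell-1})m_\ell$ (includes $F_n$ and $H_{2^r}=F_{(2,\dots,2)}$). Photons have external modes $0,\dots,n-1$ and internal states in a space with orthonormal basis $\{\xi_0,\xi_1,\dots\}$; $\hat U$ acts as $a_j^\dagger[\xi]\mapsto\sum_iU_{ij}a_i^\dagger[\xi]$. Ideal patterns: $(s_0,\dots,s_{n-1})$ with $\sum s_i=n$, $s_0=1$, $\langle s_0,\dots,s_{n-1}|\hat U|1,\dots,1\rangle\ne0$. Input $\rho^{(n)}(\epsilon)$: one photon per mode, the photon in mode $i$ independently having internal state $\xi_0$ with probability $1-\epsilon$, otherwise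 $\xi_j$ with probability $\epsilon/R$ for each $1\le j\le R$ (URS model, fixed $R\ge1$), or $\xi_{i+1}$ with probability $\epsilon$ (OBB limit). Lossless protocol: apply $\hat U$, count photons in modes $1,\dots,n-1$ as $(s_1,\dots,s_{n-1})$, set $s_0=n-\sum_{j\ge1}s_j$, herald iff $(s_0,\dots,s_{n-1})$ is ideal; $h_n(\epsilon)$ is the heralding probability. Lossy protocol: after $\hat U$, each photon is independently lost with probability $\Lambda$ (a loss channel on each mode); then photons in modes $1,\dots,n-1$ are counted as $(s_1,\dots,s_{n-1})$, and success is heralded iff $(1,s_1,\dots,s_{n-1})$ is an ideal pattern; $h_n(\epsilon;\lambda)$ is this heralding probability. *)

theory Defs
  imports "HOL-Analysis.Analysis" "HOL-Library.Multiset" "HOL-Library.FuncSet"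
begin

definition fourier :: "nat \<Rightarrow> nat \<Rightarrow> nat \<Rightarrow> complex" where
  "fourier m j k = exp (2 * complex_of_real pi * \<i> * of_nat j * of_nat k / of_nat m)
                   / complex_of_real (sqrt (real m))"

text \<open>Mixed-radix digit t of mode x: mode m_1 + n_1 m_2 + ... + (n_1...n_(l-1)) m_l.\<close>
definition digit :: "nat list \<Rightarrow> nat \<Rightarrow> nat \<Rightarrow> nat" where
  "digit ns t x = (x div prod_list (take t ns)) mod (ns ! t)"

text \<open>F_(n_1,...,n_l) = F_(n_1) tensor ... tensor F_(n_l), with the above mode labelling.\<close>
definition fourier_tensor :: "nat list \<Rightarrow> nat \<Rightarrow> nat \<Rightarrow> complex" where
  "fourier_tensor ns x y = (\<Prod>t<length ns. fourier (ns ! t) (digit ns t x) (digit ns t y))"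

text \<open>A Fock basis state is a multiset of (external mode, internal state index) pairs;
  a (pure) state is a finitely supported map of such basis states to amplitudes.\<close>
type_synonym occ = "(nat \<times> nat) multiset"
type_synonym fstate = "occ \<Rightarrow> complex"

definition vac :: fstate where
  "vac m = (if m = {#} then 1 else 0)"

text \<open>Creation operator a^dagger_j[xi_k] for p = (j,k):
  a^dagger |m'> = sqrt(m'(p)+1) |m'+p>.\<close>
definition create :: "nat \<times> nat \<Rightarrow> fstate \<Rightarrow> fstate" where
  "create p \<psi> m = (if p \<in># m then complex_of_real (sqrt (real (count m p))) * \<psi> (m - {#p#}) else 0)"

text \<open>Output state U-hat applied to prod_(i<n) a_i^dagger[xi_(c i)] |vac>, where
  U-hat maps a_i^dagger[xi] to sum_j U_(j i) a_j^dagger[xi].\<close>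
fun evolve :: "(nat \<Rightarrow> nat \<Rightarrow> complex) \<Rightarrow> nat \<Rightarrow> (nat \<Rightarrow> nat) \<Rightarrow> nat \<Rightarrow> fstate" where
  "evolve U n c 0 = vac"
| "evolve U n c (Suc i) = (\<lambda>m. \<Sum>j<n. U j i * create (j, c i) (evolve U n c i) m)"

definition output_state :: "(nat \<Rightarrow> nat \<Rightarrow> complex) \<Rightarrow> nat \<Rightarrow> (nat \<Rightarrow> nat) \<Rightarrow> fstate" where
  "output_state U n c = evolve U n c n"

definition mode_count :: "occ \<Rightarrow> nat \<Rightarrow> nat" where
  "mode_count m j = size (filter_mset (\<lambda>p. fst p = j) m)"

definition outcomes :: "nat \<Rightarrow> nat set \<Rightarrow> occ set" where
  "outcomes n K = {m. set_mset m \<subseteq> {..<n} \<times> K \<and> size m = n}"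

definition pattern_occ :: "nat \<Rightarrow> (nat \<Rightarrow> nat) \<Rightarrow> occ" where
  "pattern_occ n s = (\<Sum>j<n. replicate_mset (s j) (j, 0))"

definition ideal :: "(nat \<Rightarrow> nat \<Rightarrow> complex) \<Rightarrow> nat \<Rightarrow> (nat \<Rightarrow> nat) \<Rightarrow> bool" where
  "ideal U n s \<longleftrightarrow> (\<Sum>i<n. s i) = n \<and> s 0 = 1 \<and>
      output_state U n (\<lambda>_. 0) (pattern_occ n s) \<noteq> 0"

datatype noise_model = URS nat | OBB

text \<open>Probability that the photon in mode i has internal state xi_k.\<close>
fun noise_prob :: "noise_model \<Rightarrow> real \<Rightarrow> nat \<Rightarrow> nat \<Rightarrow> real" where
  "noise_prob (URS R) \<epsilon> i k =
     (if k = 0 then 1 - \<epsilon> else if k \<le> R then \<epsilon> / real R else 0)"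
| "noise_prob OBB \<epsilon> i k =
     (if k = 0 then 1 - \<epsilon> else if k = i + 1 then \<epsilon> else 0)"

text \<open>A finite set of internal labels containing the support of the noise model.\<close>
fun colours :: "noise_model \<Rightarrow> nat \<Rightarrow> nat set" where
  "colours (URS R) n = {..R}"
| "colours OBB n = {..n}"

definition configs :: "noise_model \<Rightarrow> nat \<Rightarrow> (nat \<Rightarrow> nat) set" where
  "configs model n = {..<n} \<rightarrow>\<^sub>E colours model n"

definition config_weight :: "noise_model \<Rightarrow> real \<Rightarrow> nat \<Rightarrow> (nat \<Rightarrow> nat) \<Rightarrow> real" where
  "config_weight model \<epsilon> n c = (\<Prod>i<n. noise_prob model \<epsilon> i (c i))"

definition herald_lossless :: "(nat \<Rightarrow> nat \<Rightarrow> complex) \<Rightarrow> nat \<Rightarrow> occ \<Rightarrow> bool" where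
  "herald_lossless U n m \<longleftrightarrow>
     ideal U n (\<lambda>j. if j = 0 then n - (\<Sum>j'\<in>{1..<n}. mode_count m j') else mode_count m j)"

definition h_lossless :: "(nat \<Rightarrow> nat \<Rightarrow> complex) \<Rightarrow> nat \<Rightarrow> noise_model \<Rightarrow> real \<Rightarrow> real" where
  "h_lossless U n model \<epsilon> =
     (\<Sum>c\<in>configs model n. config_weight model \<epsilon> n c *
        (\<Sum>m\<in>outcomes n (colours model n).
           if herald_lossless U n m then (cmod (output_state U n c m))\<^sup>2 else 0))"

text \<open>Each of k photons survives independently with probability 1 - Lambda.\<close>
definition survive_prob :: "real \<Rightarrow> nat \<Rightarrow> nat \<Rightarrow> real" where
  "survive_prob \<Lambda> k t = real (k choose t) * (1 - \<Lambda>) ^ t * \<Lambda> ^ (k - t)"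

definition herald_lossy_prob :: "(nat \<Rightarrow> nat \<Rightarrow> complex) \<Rightarrow> nat \<Rightarrow> real \<Rightarrow> occ \<Rightarrow> real" where
  "herald_lossy_prob U n \<Lambda> m =
     (\<Sum>t\<in>{1..<n} \<rightarrow>\<^sub>E {..n}.
        if ideal U n (\<lambda>j. if j = 0 then 1 else t j)
        then (\<Prod>j\<in>{1..<n}. survive_prob \<Lambda> (mode_count m j) (t j)) else 0)"

definition h_lossy :: "(nat \<Rightarrow> nat \<Rightarrow> complex) \<Rightarrow> nat \<Rightarrow> noise_model \<Rightarrow> real \<Rightarrow> real \<Rightarrow> real" where
  "h_lossy U n model \<epsilon> \<Lambda> =
     (\<Sum>c\<in>configs model n. config_weight model \<epsilon> n c *
        (\<Sum>m\<in>outcomes n (colours model n).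
           (cmod (output_state U n c m))\<^sup>2 * herald_lossy_prob U n \<Lambda> m))"

end

theory Submission
  imports Defs
begin

(* A heralded lossless outcome stays heralded under loss with probability at least
   (1 - Lambda)^(n-1): it suffices that the n - 1 photons counted in modes 1..n-1 all survive.
   For epsilon = 0 this is the only way to be heralded.  Otherwise some ideal pattern (1, t) with
   t <= k differs from the lossless counts k, and then k arises from (1, t) by moving the photon of
   mode 0 into a single mode j0 >= 1.  Both patterns carry nonzero amplitude in the ideal output
   of F_(n_1,...,n_l), so both obey its suppression law: for every digit position t, the t-th
   mixed-radix digits of the occupied modes add up to a multiple of n_t.  Subtracting, every digit
   of j0 vanishes, so j0 = 0, a contradiction.  The suppression law holds because incrementing the
   t-th digit of the input mode permutes the commuting input creation operators, while it
   multiplies output column j by the root of unity exp(2 pi i digit_t(j) / n_t); hence the ideal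
   output state is invariant under the corresponding phase operator. *)

section \<open>Roots of unity and mixed-radix digits\<close>

definition unit_root :: "nat \<Rightarrow> complex" where
  "unit_root N = exp (2 * complex_of_real pi * \<i> / of_nat N)"

lemma unit_root_power: "unit_root N ^ j = exp (2 * complex_of_real pi * \<i> * of_nat j / of_nat N)"
  unfolding unit_root_def by (simp flip: exp_of_nat_mult add: field_simps)

lemma unit_root_power_eq_1_iff: "N > 0 \<Longrightarrow> unit_root N ^ j = 1 \<longleftrightarrow> N dvd j"
  unfolding unit_root_power by (rule complex_root_unity_eq_1) simp

lemma unit_root_power_mod:
  assumes "N > 0"
  shows "unit_root N ^ j = unit_root N ^ (j mod N)"
proof -
  have "unit_root N ^ N = 1" using assms by (simp add: unit_root_power_eq_1_iff)
  moreover have "unit_root N ^ j = (unit_root N ^ N) ^ (j div N) * unit_root N ^ (j mod N)"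
    by (simp flip: power_mult power_add)
  ultimately show ?thesis by simp
qed

lemma fourier_unit_root: "fourier N a b = unit_root N ^ (a * b) / complex_of_real (sqrt (real N))"
  unfolding fourier_def unit_root_power by (simp add: mult.assoc)

lemma fourier_Suc_mod:
  assumes "N > 0"
  shows "fourier N a (Suc b mod N) = unit_root N ^ a * fourier N a b"
proof -
  have "unit_root N ^ (a * (Suc b mod N)) = unit_root N ^ (a * Suc b)"
    using unit_root_power_mod[OF assms] by (metis mod_mult_right_eq)
  then show ?thesis
    unfolding fourier_unit_root by (simp add: power_add)
qed

lemma mixed_radix_digits:
  fixes a r q P N :: nat
  assumes "a < P" "r < N"
  shows "(a + P * r + P * N * q) mod P = a"
    and "(a + P * r + P * N * q) div P mod N = r"
    and "(a + P * r + P * N * q) div (P * N) = q"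
proof -
  have eq: "a + P * r + P * N * q = a + P * (r + N * q)" by (simp add: algebra_simps)
  have div: "(a + P * r + P * N * q) div P = r + N * q"
    unfolding eq using assms(1) by simp
  show "(a + P * r + P * N * q) mod P = a" unfolding eq using assms(1) by simp
  show "(a + P * r + P * N * q) div P mod N = r" unfolding div using assms(2) by simp
  show "(a + P * r + P * N * q) div (P * N) = q"
    unfolding div_mult2_eq div using assms(2) by simp
qed

lemma mod_mult_div_eq_div_mod: "(z::nat) mod (P * N) div P = z div P mod N"
  by (cases "P = 0") (simp_all add: mod_mult2_eq)

lemma mixed_radix_recompose:
  fixes x P N :: nat
  shows "x = x mod P + P * (x div P mod N) + P * N * (x div (P * N))"
  using mod_mult2_eq[of x P N] div_mult_mod_eq[of x "P * N"] by (simp add: algebra_simps)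

definition place_value :: "nat list \<Rightarrow> nat \<Rightarrow> nat" where
  "place_value ns t = prod_list (take t ns)"

lemma digit_place_value: "digit ns t x = x div place_value ns t mod ns ! t"
  unfolding digit_def place_value_def ..

lemma place_value_Suc: "t < length ns \<Longrightarrow> place_value ns (Suc t) = place_value ns t * ns ! t"
  unfolding place_value_def by (simp add: take_Suc_conv_app_nth)

lemma place_value_dvd: "s \<le> t \<Longrightarrow> place_value ns s dvd place_value ns t"
proof -
  assume "s \<le> t"
  then have "take t ns = take s ns @ take (t - s) (drop s ns)"
    using take_add[of s "t - s" ns] by simp
  then show ?thesis unfolding place_value_def by simp
qed

lemma place_value_length: "place_value ns (length ns) = prod_list ns"
  unfolding place_value_def by simp

lemma digits_eq_0_imp_eq_0:
  assumes "x < prod_list ns" and "\<And>t. t < length ns \<Longrightarrow> digit ns t x = 0"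
  shows "x = 0"
  using assms
proof (induction ns arbitrary: x)
  case (Cons a ns)
  have "x mod a = 0"
    using Cons.prems(2)[of 0] by (simp add: digit_def)
  moreover have "x div a = 0"
  proof (rule Cons.IH)
    show "x div a < prod_list ns"
      using Cons.prems(1) by (cases "a = 0") (simp_all add: div_less_iff_less_mult mult.commute)
    show "digit ns t (x div a) = 0" if "t < length ns" for t
      using Cons.prems(2)[of "Suc t"] that by (simp add: digit_def div_mult2_eq)
  qed
  ultimately show ?case using div_mult_mod_eq[of x a] by simp
qed simp

lemma place_value_pos:
  assumes radix_pos: "\<forall>k\<in>set ns. k > 0"
  shows "place_value ns s > 0"
proof -
  have "0 \<notin> set (take s ns)" using radix_pos in_set_takeD by fastforce
  then have "prod_list (take s ns) \<noteq> 0" by (simp add: prod_list_zero_iff)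
  then show ?thesis unfolding place_value_def by simp
qed

lemma prod_list_pos: "\<forall>k\<in>set ns. k > 0 \<Longrightarrow> prod_list ns > (0::nat)"
  using place_value_pos[of ns "length ns"] by (simp add: place_value_length)

definition incr_digit :: "nat list \<Rightarrow> nat \<Rightarrow> nat \<Rightarrow> nat" where
  "incr_digit ns t x = x mod place_value ns t
     + place_value ns t * (Suc (digit ns t x) mod ns ! t)
     + place_value ns t * ns ! t * (x div (place_value ns t * ns ! t))"

context
  fixes ns :: "nat list" and t :: nat
  assumes radix_pos: "\<forall>k\<in>set ns. k > 0" and t_less: "t < length ns"
begin

lemma radix_pos_nth: "ns ! t > 0"
  using radix_pos t_less by simp

lemma incr_digit_digits:
  shows "incr_digit ns t x mod place_value ns t = x mod place_value ns t"
    and "digit ns t (incr_digit ns t x) = Suc (digit ns t x) mod ns ! t"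
    and "incr_digit ns t x div place_value ns (Suc t) = x div place_value ns (Suc t)"
  using mixed_radix_digits[of "x mod place_value ns t" "place_value ns t"
      "Suc (digit ns t x) mod ns ! t" "ns ! t" "x div (place_value ns t * ns ! t)"]
  by (simp_all add: incr_digit_def digit_place_value place_value_Suc[OF t_less]
      place_value_pos[OF radix_pos] radix_pos_nth)

lemma digit_incr_digit_other:
  assumes s: "s < length ns" "s \<noteq> t"
  shows "digit ns s (incr_digit ns t x) = digit ns s x"
proof (cases "s < t")
  case True
  have dvd: "place_value ns (Suc s) dvd place_value ns t"
    using True by (simp add: place_value_dvd)
  have "digit ns s y = y mod place_value ns (Suc s) div place_value ns s" for y
    by (simp only: place_value_Suc[OF s(1)] mod_mult_div_eq_div_mod digit_place_value)
  then have "digit ns s y = y mod place_value ns t mod place_value ns (Suc s) div place_value ns s"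
    for y
    by (simp only: mod_mod_cancel[OF dvd])
  then show ?thesis by (simp only: incr_digit_digits(1))
next
  case False
  then obtain K where K: "place_value ns s = place_value ns (Suc t) * K"
    using place_value_dvd[of "Suc t" s ns] s(2) by (auto simp: dvd_def)
  show ?thesis
    by (simp add: digit_place_value K div_mult2_eq incr_digit_digits(3))
qed

lemma inj_incr_digit: "inj (incr_digit ns t)"
proof
  fix x y assume eq: "incr_digit ns t x = incr_digit ns t y"
  let ?P = "place_value ns t" and ?N = "ns ! t"
  have "Suc (digit ns t x) mod ?N = Suc (digit ns t y) mod ?N"
    using eq by (simp flip: incr_digit_digits(2))
  moreover have "digit ns t x < ?N" "digit ns t y < ?N"
    using radix_pos_nth by (simp_all add: digit_place_value)
  ultimately have "x div ?P mod ?N = y div ?P mod ?N"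
    unfolding digit_place_value by (auto simp: mod_Suc split: if_splits)
  moreover have "x mod ?P = y mod ?P"
    using eq incr_digit_digits(1)[of x] incr_digit_digits(1)[of y] by simp
  moreover have "x div (?P * ?N) = y div (?P * ?N)"
    using eq incr_digit_digits(3)[of x] incr_digit_digits(3)[of y] by (simp add: place_value_Suc[OF t_less])
  ultimately show "x = y"
    using mixed_radix_recompose[of x ?P ?N] mixed_radix_recompose[of y ?P ?N] by simp
qed

lemma incr_digit_less:
  assumes "x < prod_list ns"
  shows "incr_digit ns t x < prod_list ns"
proof -
  obtain K where K: "prod_list ns = place_value ns (Suc t) * K"
    using place_value_dvd[of "Suc t" "length ns" ns] t_less by (auto simp: place_value_length dvd_def)
  have "x div place_value ns (Suc t) < K"
    using assms K place_value_pos[OF radix_pos] by (simp add: div_less_iff_less_mult mult.commute)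
  then show ?thesis
    using K place_value_pos[OF radix_pos]
    by (simp add: incr_digit_digits(3) div_less_iff_less_mult[symmetric] mult.commute)
qed

lemma incr_digit_image: "incr_digit ns t ` {..<prod_list ns} = {..<prod_list ns}"
  using inj_incr_digit incr_digit_less by (intro endo_inj_surj) (auto simp: inj_on_def inj_def)

lemma fourier_tensor_incr_digit:
  "fourier_tensor ns j (incr_digit ns t k) = unit_root (ns ! t) ^ digit ns t j * fourier_tensor ns j k"
proof -
  let ?F = "\<lambda>s x. fourier (ns ! s) (digit ns s j) (digit ns s x)"
  have t: "t \<in> {..<length ns}" using t_less by simp
  have others: "(\<Prod>s\<in>{..<length ns} - {t}. ?F s (incr_digit ns t k))
      = (\<Prod>s\<in>{..<length ns} - {t}. ?F s k)"
    by (rule prod.cong) (simp_all add: digit_incr_digit_other)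
  show ?thesis
    unfolding fourier_tensor_def prod.remove[OF finite_lessThan t] others
    by (simp add: incr_digit_digits(2) fourier_Suc_mod[OF radix_pos_nth])
qed

end

section \<open>The suppression law\<close>

lemma create_commute: "create p (create q \<psi>) = create q (create p \<psi>)"
proof
  fix m
  show "create p (create q \<psi>) m = create q (create p \<psi>) m"
    by (cases "p = q")
      (auto simp: create_def in_diff_count diff_right_commute add_mset_commute)
qed

lemma create_sum:
  "create p (\<lambda>m'. \<Sum>j\<in>J. a j * \<phi> j m') m = (\<Sum>j\<in>J. a j * create p (\<phi> j) m)"
  unfolding create_def by (auto simp: sum_distrib_left algebra_simps)

text \<open>The image of a_k^dagger[xi_0] under U-hat.\<close>
definition create_out :: "(nat \<Rightarrow> nat \<Rightarrow> complex) \<Rightarrow> nat \<Rightarrow> nat \<Rightarrow> fstate \<Rightarrow> fstate" where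
  "create_out U n k \<psi> = (\<lambda>m. \<Sum>j<n. U j k * create (j, 0) \<psi> m)"

lemma evolve_ideal_eq_fold: "evolve U n (\<lambda>_. 0) i = fold (create_out U n) [0..<i] vac"
  by (induction i) (simp_all add: create_out_def)

lemma create_out_create_out:
  "create_out U n k (create_out U n l \<psi>) m =
     (\<Sum>j<n. \<Sum>j'<n. U j k * U j' l * create (j, 0) (create (j', 0) \<psi>) m)"
  by (simp add: create_out_def create_sum sum_distrib_left mult.assoc)

lemma create_out_commute: "create_out U n k \<circ> create_out U n l = create_out U n l \<circ> create_out U n k"
proof (intro ext)
  fix \<psi> m
  have "(\<Sum>j<n. \<Sum>j'<n. U j k * U j' l * create (j, 0) (create (j', 0) \<psi>) m)
      = (\<Sum>j'<n. \<Sum>j<n. U j' l * U j k * create (j', 0) (create (j, 0) \<psi>) m)"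
    by (subst sum.swap) (simp add: create_commute mult.commute)
  then show "(create_out U n k \<circ> create_out U n l) \<psi> m = (create_out U n l \<circ> create_out U n k) \<psi> m"
    by (simp only: comp_apply create_out_create_out)
qed

definition phase :: "(nat \<Rightarrow> nat) \<Rightarrow> complex \<Rightarrow> fstate \<Rightarrow> fstate" where
  "phase g w \<psi> m = w ^ (\<Sum>p\<in>#m. g (fst p)) * \<psi> m"

lemma phase_vac: "phase g w vac = vac"
  by (auto simp: phase_def vac_def)

lemma phase_create: "phase g w (create p \<psi>) = (\<lambda>m. w ^ g (fst p) * create p (phase g w \<psi>) m)"
proof
  fix m
  show "phase g w (create p \<psi>) m = w ^ g (fst p) * create p (phase g w \<psi>) m"
  proof (cases "p \<in># m")
    case True
    then obtain m' where "m = add_mset p m'" by (blast dest: multi_member_split)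
    then show ?thesis by (simp add: create_def phase_def power_add algebra_simps)
  qed (simp add: create_def phase_def)
qed

lemma phase_create_out:
  assumes "\<forall>j k. U j (\<sigma> k) = w ^ g j * U j k"
  shows "phase g w (create_out U n k \<psi>) = create_out U n (\<sigma> k) (phase g w \<psi>)"
proof
  fix m
  have "phase g w (create_out U n k \<psi>) m = (\<Sum>j<n. U j k * phase g w (create (j, 0) \<psi>) m)"
    by (simp add: phase_def create_out_def sum_distrib_left algebra_simps)
  also have "\<dots> = create_out U n (\<sigma> k) (phase g w \<psi>) m"
    unfolding phase_create create_out_def by (simp add: assms algebra_simps)
  finally show "phase g w (create_out U n k \<psi>) m = create_out U n (\<sigma> k) (phase g w \<psi>) m" .
qed

lemma phase_fold_create_out:
  assumes "\<forall>j k. U j (\<sigma> k) = w ^ g j * U j k"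
  shows "phase g w (fold (create_out U n) ks \<psi>) = fold (create_out U n) (map \<sigma> ks) (phase g w \<psi>)"
  by (induction ks arbitrary: \<psi>) (simp_all add: phase_create_out[OF assms])

theorem suppression_law:
  assumes radix_pos: "\<forall>k\<in>set ns. k > 0" and t: "t < length ns"
    and nonzero: "output_state (fourier_tensor ns) (prod_list ns) (\<lambda>_. 0) m \<noteq> 0"
  shows "ns ! t dvd (\<Sum>p\<in>#m. digit ns t (fst p))"
proof -
  let ?U = "fourier_tensor ns" and ?n = "prod_list ns" and ?\<sigma> = "incr_digit ns t"
  let ?g = "digit ns t" and ?w = "unit_root (ns ! t)"
  have column_phase: "\<forall>j k. ?U j (?\<sigma> k) = ?w ^ ?g j * ?U j k"
    using fourier_tensor_incr_digit[OF radix_pos t] by blast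
  have "mset (map ?\<sigma> [0..<?n]) = mset [0..<?n]"
    using inj_incr_digit[OF radix_pos t] incr_digit_image[OF radix_pos t]
    by (simp add: image_mset_mset_set inj_on_subset atLeast0LessThan)
  then have permuted: "fold (create_out ?U ?n) (map ?\<sigma> [0..<?n]) = fold (create_out ?U ?n) [0..<?n]"
    by (intro fold_multiset_equiv create_out_commute)
  have "phase ?g ?w (output_state ?U ?n (\<lambda>_. 0)) = output_state ?U ?n (\<lambda>_. 0)"
    unfolding output_state_def evolve_ideal_eq_fold phase_fold_create_out[OF column_phase]
      phase_vac permuted by (rule refl)
  then have "?w ^ (\<Sum>p\<in>#m. ?g (fst p)) * output_state ?U ?n (\<lambda>_. 0) m = output_state ?U ?n (\<lambda>_. 0) m"
    unfolding phase_def by (rule fun_cong)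
  then have "?w ^ (\<Sum>p\<in>#m. ?g (fst p)) = 1"
    using nonzero by simp
  then show ?thesis
    using radix_pos t by (simp add: unit_root_power_eq_1_iff)
qed

section \<open>Heralding a single outcome\<close>

lemma mode_count_add_mset: "mode_count (add_mset p m) j = mode_count m j + (if fst p = j then 1 else 0)"
  by (simp add: mode_count_def)

lemma sum_mset_fst_eq_sum_mode_count:
  assumes "set_mset m \<subseteq> {..<n} \<times> K"
  shows "(\<Sum>p\<in>#m. f (fst p)) = (\<Sum>j<n. f j * mode_count m j)"
  using assms
proof (induction m)
  case (add p m)
  then have p: "fst p < n" by auto
  have "f j * mode_count (add_mset p m) j = f j * mode_count m j + (if fst p = j then f j else 0)" for j
    by (simp add: mode_count_add_mset)
  then have "(\<Sum>j<n. f j * mode_count (add_mset p m) j)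
      = (\<Sum>j<n. f j * mode_count m j) + (\<Sum>j<n. if fst p = j then f j else 0)"
    by (simp add: sum.distrib)
  with add p show ?case by simp
qed (simp add: mode_count_def)

lemma sum_mode_count:
  assumes "set_mset m \<subseteq> {..<n} \<times> K"
  shows "(\<Sum>j<n. mode_count m j) = size m"
  using sum_mset_fst_eq_sum_mode_count[OF assms, of "\<lambda>_. 1"] by simp

lemma sum_mset_pattern_occ: "(\<Sum>p\<in>#pattern_occ n s. g (fst p)) = (\<Sum>j<n. s j * g j)"
  unfolding pattern_occ_def by (induction n) simp_all

lemma sum_lessThan_split_0: "(n::nat) > 0 \<Longrightarrow> (\<Sum>j<n. f j) = f 0 + (\<Sum>j\<in>{1..<n}. f j)"
  using sum.atLeast_Suc_lessThan[of 0 n f] by (simp add: atLeast0LessThan)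

lemma ideal_cong:
  assumes "\<And>j. j < n \<Longrightarrow> s j = s' j" and "n > 0"
  shows "ideal U n s = ideal U n s'"
proof -
  have "pattern_occ n s = pattern_occ n s'" "(\<Sum>j<n. s j) = (\<Sum>j<n. s' j)" "s 0 = s' 0"
    using assms by (simp_all add: pattern_occ_def)
  then show ?thesis by (simp add: ideal_def)
qed

definition herald_pattern :: "(nat \<Rightarrow> nat) \<Rightarrow> nat \<Rightarrow> nat" where
  "herald_pattern t j = (if j = 0 then 1 else t j)"

definition lossless_counts :: "occ \<Rightarrow> nat \<Rightarrow> nat \<Rightarrow> nat" where
  "lossless_counts m n = restrict (mode_count m) {1..<n}"

lemma sum_ideal_herald_pattern:
  assumes "n > 0" and "ideal U n (herald_pattern t)"
  shows "(\<Sum>j\<in>{1..<n}. t j) = n - 1"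
proof -
  have "(\<Sum>j\<in>{1..<n}. herald_pattern t j) = (\<Sum>j\<in>{1..<n}. t j)"
    by (simp add: herald_pattern_def)
  then show ?thesis
    using assms sum_lessThan_split_0[of n "herald_pattern t"]
    by (simp add: ideal_def herald_pattern_def)
qed

lemma herald_lossless_iff:
  assumes n: "n > 0"
  shows "herald_lossless U n m \<longleftrightarrow> ideal U n (herald_pattern (lossless_counts m n))"
proof -
  let ?S = "\<Sum>j\<in>{1..<n}. mode_count m j"
  let ?s = "\<lambda>j. if j = 0 then n - ?S else mode_count m j"
  have same: "ideal U n ?s = ideal U n (herald_pattern (lossless_counts m n))" if "n - ?S = 1"
    using that n by (intro ideal_cong) (auto simp: herald_pattern_def lossless_counts_def)
  have "(\<Sum>j\<in>{1..<n}. lossless_counts m n j) = ?S"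
    by (simp add: lossless_counts_def)
  then have "ideal U n (herald_pattern (lossless_counts m n)) \<Longrightarrow> n - ?S = 1"
    using sum_ideal_herald_pattern[OF n] n by fastforce
  moreover have "ideal U n ?s \<Longrightarrow> n - ?S = 1"
    by (simp add: ideal_def)
  ultimately show ?thesis
    unfolding herald_lossless_def using same by blast
qed

lemma lossless_counts_PiE:
  assumes "m \<in> outcomes n K"
  shows "lossless_counts m n \<in> {1..<n} \<rightarrow>\<^sub>E {..n}"
proof -
  have "mode_count m j \<le> size m" for j
    unfolding mode_count_def by (rule size_filter_mset_lesseq)
  then have "mode_count m j \<le> n" for j
    using assms by (simp add: outcomes_def)
  then show ?thesis by (auto simp: lossless_counts_def)
qed

definition herald_term :: "(nat \<Rightarrow> nat \<Rightarrow> complex) \<Rightarrow> nat \<Rightarrow> real \<Rightarrow> occ \<Rightarrow> (nat \<Rightarrow> nat) \<Rightarrow> real" where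
  "herald_term U n \<Lambda> m t = (if ideal U n (herald_pattern t)
     then (\<Prod>j\<in>{1..<n}. survive_prob \<Lambda> (mode_count m j) (t j)) else 0)"

lemma herald_lossy_prob_eq_sum:
  "herald_lossy_prob U n \<Lambda> m = (\<Sum>t\<in>{1..<n} \<rightarrow>\<^sub>E {..n}. herald_term U n \<Lambda> m t)"
  unfolding herald_lossy_prob_def herald_term_def herald_pattern_def ..

lemma herald_term_nonneg: "0 \<le> \<Lambda> \<Longrightarrow> \<Lambda> \<le> 1 \<Longrightarrow> herald_term U n \<Lambda> m t \<ge> 0"
  unfolding herald_term_def survive_prob_def by (auto intro!: prod_nonneg)

lemma herald_term_lossless_counts:
  assumes "n > 0"
  shows "herald_term U n \<Lambda> m (lossless_counts m n)
    = (if herald_lossless U n m then (1 - \<Lambda>) ^ (n - 1) else 0)"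
proof (cases "herald_lossless U n m")
  case True
  then have ideal: "ideal U n (herald_pattern (lossless_counts m n))"
    using herald_lossless_iff[OF assms] by blast
  have "(\<Prod>j\<in>{1..<n}. survive_prob \<Lambda> (mode_count m j) (lossless_counts m n j))
      = (1 - \<Lambda>) ^ (\<Sum>j\<in>{1..<n}. lossless_counts m n j)"
    by (simp add: lossless_counts_def survive_prob_def power_sum)
  also have "\<dots> = (1 - \<Lambda>) ^ (n - 1)"
    using sum_ideal_herald_pattern[OF assms ideal] by simp
  finally show ?thesis
    using True ideal by (simp add: herald_term_def)
next
  case False
  then show ?thesis using herald_lossless_iff[OF assms] by (simp add: herald_term_def)
qed

lemma herald_lossy_prob_ge:
  assumes "n > 0" "m \<in> outcomes n K" "0 \<le> \<Lambda>" "\<Lambda> \<le> 1"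
  shows "herald_lossy_prob U n \<Lambda> m \<ge> (if herald_lossless U n m then (1 - \<Lambda>) ^ (n - 1) else 0)"
  unfolding herald_lossy_prob_eq_sum herald_term_lossless_counts[OF assms(1), symmetric]
  using assms lossless_counts_PiE[OF assms(2)]
  by (intro member_le_sum herald_term_nonneg finite_PiE) auto

lemma survive_prob_eq_0: "k < t \<Longrightarrow> survive_prob \<Lambda> k t = 0"
  by (simp add: survive_prob_def)

lemma extra_photon_in_one_mode:
  fixes k t :: "nat \<Rightarrow> nat"
  assumes le: "\<forall>j\<in>{1..<n}. t j \<le> k j" and sum_t: "(\<Sum>j\<in>{1..<n}. t j) = n - 1"
    and sum_k: "(\<Sum>j<n. k j) = n" and differ: "\<exists>j\<in>{1..<n}. t j \<noteq> k j"
  shows "\<exists>j0\<in>{1..<n}. \<forall>j<n.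
    k j + (if j = 0 then 1 else 0) = herald_pattern t j + (if j = j0 then 1 else 0)"
proof -
  define excess where "excess j = k j - t j" for j
  have n: "n > 0" using differ by auto
  have "(\<Sum>j\<in>{1..<n}. excess j) = (\<Sum>j\<in>{1..<n}. k j) - (n - 1)"
    unfolding excess_def using sum_subtractf_nat[of "{1..<n}" t k] le sum_t by simp
  also have "(\<Sum>j\<in>{1..<n}. k j) = n - k 0"
    using sum_k sum_lessThan_split_0[OF n, of k] by simp
  finally have sum_excess: "(\<Sum>j\<in>{1..<n}. excess j) = n - k 0 - (n - 1)" .
  obtain j where j: "j \<in> {1..<n}" "t j \<noteq> k j" using differ by blast
  moreover have "t j \<le> k j" using le j(1) by blast
  ultimately have "excess j \<noteq> 0" by (simp add: excess_def)
  then have "(\<Sum>j\<in>{1..<n}. excess j) \<noteq> 0" using j(1) by (auto simp: sum_eq_0_iff)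
  then have "k 0 = 0"
    using sum_excess n by linarith
  then have "(\<Sum>j\<in>{1..<n}. excess j) = 1"
    using sum_excess n by simp
  then obtain j0 where j0: "j0 \<in> {1..<n}" "excess j0 = 1"
    and others: "\<forall>j\<in>{1..<n}. j0 \<noteq> j \<longrightarrow> excess j = 0"
    using sum_eq_1_iff[OF finite_atLeastLessThan] by blast
  have "k j = t j + (if j = j0 then 1 else 0)" if j: "j \<in> {1..<n}" for j
  proof -
    have "t j \<le> k j" using le j by blast
    moreover have "excess j = (if j = j0 then 1 else 0)" using others j0 j by auto
    ultimately show ?thesis by (simp add: excess_def)
  qed
  then have "k j + (if j = 0 then 1 else 0) = herald_pattern t j + (if j = j0 then 1 else 0)"
    if "j < n" for j
    using that j0 \<open>k 0 = 0\<close> by (cases "j = 0") (simp_all add: herald_pattern_def)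
  with j0 show ?thesis by blast
qed

lemma sum_times_add_delta:
  fixes f a :: "nat \<Rightarrow> nat"
  assumes "c < n"
  shows "(\<Sum>j<n. f j * (a j + (if j = c then 1 else 0))) = (\<Sum>j<n. f j * a j) + f c"
proof -
  have "f j * (a j + (if j = c then 1 else 0)) = f j * a j + (if c = j then f j else 0)" for j
    by simp
  then show ?thesis using assms by (simp add: sum.distrib)
qed

lemma no_single_photon_transfer:
  assumes radix_pos: "\<forall>k\<in>set ns. k > 0" and n: "n = prod_list ns"
    and m: "m \<in> outcomes n K" "output_state (fourier_tensor ns) n (\<lambda>_. 0) m \<noteq> 0"
    and s: "output_state (fourier_tensor ns) n (\<lambda>_. 0) (pattern_occ n s) \<noteq> 0"
    and j0: "j0 < n"
    and transfer: "\<forall>j<n. mode_count m j + (if j = 0 then 1 else 0) = s j + (if j = j0 then 1 else 0)"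
  shows "j0 = 0"
proof (rule digits_eq_0_imp_eq_0)
  show "j0 < prod_list ns" using j0 n by simp
  fix t assume t: "t < length ns"
  let ?d = "digit ns t" and ?N = "ns ! t"
  have "(\<Sum>p\<in>#m. ?d (fst p)) = (\<Sum>j<n. ?d j * mode_count m j)"
    using sum_mset_fst_eq_sum_mode_count[of m n K ?d] m(1) by (simp add: outcomes_def)
  then have "?N dvd (\<Sum>j<n. ?d j * mode_count m j)"
    using suppression_law[OF radix_pos t, of m] m(2) n by simp
  moreover have "?N dvd (\<Sum>j<n. s j * ?d j)"
    using suppression_law[OF radix_pos t] s by (simp add: n flip: sum_mset_pattern_occ)
  moreover have "(\<Sum>j<n. ?d j * mode_count m j) = (\<Sum>j<n. s j * ?d j) + ?d j0"
  proof -
    have "(\<Sum>j<n. ?d j * (mode_count m j + (if j = 0 then 1 else 0)))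
        = (\<Sum>j<n. ?d j * (s j + (if j = j0 then 1 else 0)))"
      using transfer by simp
    moreover have "?d 0 = 0" by (simp add: digit_def)
    ultimately show ?thesis
      using j0 by (simp add: sum_times_add_delta mult.commute)
  qed
  ultimately have "?N dvd ?d j0"
    by (simp add: dvd_add_right_iff)
  moreover have "?d j0 < ?N"
    using radix_pos t by (simp add: digit_def)
  ultimately show "?d j0 = 0"
    using nat_dvd_not_less by blast
qed

lemma herald_term_eq_0:
  assumes radix_pos: "\<forall>k\<in>set ns. k > 0" and n: "n = prod_list ns" and U: "U = fourier_tensor ns"
    and m: "m \<in> outcomes n K" "output_state U n (\<lambda>_. 0) m \<noteq> 0"
    and t: "t \<in> {1..<n} \<rightarrow>\<^sub>E {..n}" "t \<noteq> lossless_counts m n"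
  shows "herald_term U n \<Lambda> m t = 0"
proof (rule ccontr)
  assume "herald_term U n \<Lambda> m t \<noteq> 0"
  then have ideal: "ideal U n (herald_pattern t)"
    and survives: "(\<Prod>j\<in>{1..<n}. survive_prob \<Lambda> (mode_count m j) (t j)) \<noteq> 0"
    by (auto simp: herald_term_def split: if_splits)
  have n0: "n > 0"
    using prod_list_pos[OF radix_pos] n by simp
  have "\<forall>j\<in>{1..<n}. t j \<le> mode_count m j"
  proof (intro ballI leI notI)
    fix j assume j: "j \<in> {1..<n}" and "mode_count m j < t j"
    then have "survive_prob \<Lambda> (mode_count m j) (t j) = 0"
      by (simp add: survive_prob_eq_0)
    with j have "(\<Prod>j\<in>{1..<n}. survive_prob \<Lambda> (mode_count m j) (t j)) = 0"
      by (intro prod_zero) auto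
    with survives show False by contradiction
  qed
  moreover have "(\<Sum>j\<in>{1..<n}. t j) = n - 1"
    using sum_ideal_herald_pattern[OF n0 ideal] .
  moreover have "(\<Sum>j<n. mode_count m j) = n"
    using m(1) sum_mode_count[of m n K] by (simp add: outcomes_def)
  moreover have "\<exists>j\<in>{1..<n}. t j \<noteq> mode_count m j"
  proof (rule ccontr)
    assume "\<not> ?thesis"
    then have "t = lossless_counts m n"
      using t(1) by (auto simp: lossless_counts_def fun_eq_iff PiE_iff extensional_def)
    with t(2) show False ..
  qed
  ultimately obtain j0 where j0: "j0 \<in> {1..<n}" and transfer: "\<forall>j<n.
      mode_count m j + (if j = 0 then 1 else 0) = herald_pattern t j + (if j = j0 then 1 else 0)"
    using extra_photon_in_one_mode by blast
  have "output_state U n (\<lambda>_. 0) (pattern_occ n (herald_pattern t)) \<noteq> 0"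
    using ideal by (simp add: ideal_def)
  then have "j0 = 0"
    using j0 by (intro no_single_photon_transfer[OF radix_pos n m(1) m(2)[unfolded U] _ _ transfer])
      (simp_all add: U)
  with j0 show False by simp
qed

lemma herald_lossy_prob_ideal:
  assumes radix_pos: "\<forall>k\<in>set ns. k > 0" and n: "n = prod_list ns" and U: "U = fourier_tensor ns"
    and m: "m \<in> outcomes n K" "output_state U n (\<lambda>_. 0) m \<noteq> 0"
  shows "herald_lossy_prob U n \<Lambda> m = (if herald_lossless U n m then (1 - \<Lambda>) ^ (n - 1) else 0)"
proof -
  have "n > 0"
    using prod_list_pos[OF radix_pos] n by simp
  let ?T = "{1..<n} \<rightarrow>\<^sub>E {..n}"
  have "herald_lossy_prob U n \<Lambda> m
      = herald_term U n \<Lambda> m (lossless_counts m n) + (\<Sum>t\<in>?T - {lossless_counts m n}. herald_term U n \<Lambda> m t)"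
    unfolding herald_lossy_prob_eq_sum
    by (intro sum.remove finite_PiE lossless_counts_PiE[OF m(1)]) auto
  also have "(\<Sum>t\<in>?T - {lossless_counts m n}. herald_term U n \<Lambda> m t) = 0"
    using herald_term_eq_0[OF assms] by (intro sum.neutral) blast
  finally have "herald_lossy_prob U n \<Lambda> m = herald_term U n \<Lambda> m (lossless_counts m n)"
    by simp
  then show ?thesis
    using herald_term_lossless_counts[OF \<open>n > 0\<close>] by simp
qed

section \<open>Heralding rates\<close>

lemma config_weight_nonneg: "0 \<le> \<epsilon> \<Longrightarrow> \<epsilon> \<le> 1 \<Longrightarrow> config_weight model \<epsilon> n c \<ge> 0"
  unfolding config_weight_def by (intro prod_nonneg) (cases model; simp)

lemma config_weight_0_nonzero:
  assumes "config_weight model 0 n c \<noteq> 0" and "i < n"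
  shows "c i = 0"
proof (rule ccontr)
  assume "c i \<noteq> 0"
  then have "noise_prob model 0 i (c i) = 0" by (cases model) auto
  with assms show False by (simp add: config_weight_def prod_zero_iff)
qed

lemma output_state_cong:
  assumes "\<And>i. i < n \<Longrightarrow> c i = c' i"
  shows "output_state U n c = output_state U n c'"
proof -
  have "evolve U n c i = evolve U n c' i" if "i \<le> n" for i
    using that by (induction i) (simp_all add: assms)
  then show ?thesis by (simp add: output_state_def)
qed

lemma h_lossy_ge_h_lossless:
  assumes "n > 0" and "0 \<le> \<Lambda>" "\<Lambda> \<le> 1" and "0 \<le> \<epsilon>" "\<epsilon> \<le> 1"
  shows "(1 - \<Lambda>) ^ (n - 1) * h_lossless U n model \<epsilon> \<le> h_lossy U n model \<epsilon> \<Lambda>"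
proof -
  let ?Outs = "outcomes n (colours model n)" and ?q = "(1 - \<Lambda>) ^ (n - 1)"
  let ?a = "\<lambda>c m. (cmod (output_state U n c m))\<^sup>2"
  have "?q * (if herald_lossless U n m then ?a c m else 0) \<le> ?a c m * herald_lossy_prob U n \<Lambda> m"
    if "m \<in> ?Outs" for c m
    using herald_lossy_prob_ge[OF assms(1) that assms(2,3), of U]
    by (cases "herald_lossless U n m") (simp_all add: mult.commute mult_right_mono)
  then have "?q * (\<Sum>m\<in>?Outs. if herald_lossless U n m then ?a c m else 0)
      \<le> (\<Sum>m\<in>?Outs. ?a c m * herald_lossy_prob U n \<Lambda> m)" for c
    by (simp add: sum_distrib_left sum_mono)
  then have "(\<Sum>c\<in>configs model n. config_weight model \<epsilon> n c *
        (?q * (\<Sum>m\<in>?Outs. if herald_lossless U n m then ?a c m else 0)))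
      \<le> (\<Sum>c\<in>configs model n. config_weight model \<epsilon> n c *
        (\<Sum>m\<in>?Outs. ?a c m * herald_lossy_prob U n \<Lambda> m))"
    using config_weight_nonneg[OF assms(4,5)] by (intro sum_mono mult_left_mono) auto
  then show ?thesis
    by (simp add: h_lossless_def h_lossy_def sum_distrib_left mult.left_commute)
qed

lemma h_lossy_noiseless:
  assumes radix_pos: "\<forall>k\<in>set ns. k > 0" and n: "n = prod_list ns" and U: "U = fourier_tensor ns"
  shows "h_lossy U n model 0 \<Lambda> = (1 - \<Lambda>) ^ (n - 1) * h_lossless U n model 0"
proof -
  let ?Outs = "outcomes n (colours model n)" and ?q = "(1 - \<Lambda>) ^ (n - 1)"
  let ?a = "\<lambda>c m. (cmod (output_state U n c m))\<^sup>2"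
  have "config_weight model 0 n c * (\<Sum>m\<in>?Outs. ?a c m * herald_lossy_prob U n \<Lambda> m)
      = config_weight model 0 n c * (?q * (\<Sum>m\<in>?Outs. if herald_lossless U n m then ?a c m else 0))"
    for c
  proof (cases "config_weight model 0 n c = 0")
    case False
    then have ideal: "output_state U n c = output_state U n (\<lambda>_. 0)"
      by (intro output_state_cong config_weight_0_nonzero)
    have "?a c m * herald_lossy_prob U n \<Lambda> m = ?q * (if herald_lossless U n m then ?a c m else 0)"
      if "m \<in> ?Outs" for m
      using herald_lossy_prob_ideal[OF radix_pos n U that]
      by (cases "output_state U n c m = 0") (simp_all add: ideal)
    then show ?thesis by (simp add: sum_distrib_left)
  qed simp
  then show ?thesis
    unfolding h_lossy_def h_lossless_def by (simp add: sum_distrib_left mult.left_commute)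
qed

lemma powr_power_nonneg:
  fixes x a :: real
  assumes "x \<ge> 0" and "k > 0"
  shows "(x powr a) ^ k = x powr (real k * a)"
  using assms by (cases "x = 0") (simp_all add: powr_power)

theorem theorem7:
  fixes ns :: "nat list" and model :: noise_model and \<epsilon> la :: real
  defines "n \<equiv> prod_list ns"
  defines "U \<equiv> fourier_tensor ns"
  defines "Lam \<equiv> 1 - (1 - la) powr (log 2 (real n))"
  assumes ns2: "\<forall>k\<in>set ns. k \<ge> 2"
    and n2: "n > 2"
    and R: "\<forall>R. model = URS R \<longrightarrow> R \<ge> 1"
    and eps: "0 \<le> \<epsilon>" "\<epsilon> \<le> 1"
    and lam: "0 \<le> la" "la \<le> 1"
  shows "h_lossy U n model \<epsilon> Lam \<ge> (1 - Lam) ^ (n - 1) * h_lossless U n model \<epsilon>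
       \<and> (1 - Lam) ^ (n - 1) * h_lossless U n model \<epsilon>
           = (1 - la) powr (real (n - 1) * log 2 (real n)) * h_lossless U n model \<epsilon>
       \<and> h_lossy U n model 0 Lam = (1 - Lam) ^ (n - 1) * h_lossless U n model 0
       \<and> (1 - Lam) ^ (n - 1) * h_lossless U n model 0
           = (1 - la) powr (real (n - 1) * log 2 (real n)) * h_lossless U n model 0"
proof -
  have radix_pos: "\<forall>k\<in>set ns. k > 0" using ns2 by auto
  have "(1 - la) powr log 2 (real n) \<le> 1"
    using lam n2 by (intro powr_le1) auto
  then have Lam: "0 \<le> Lam" "Lam \<le> 1"
    by (simp_all add: Lam_def)
  have loss: "(1 - Lam) ^ (n - 1) = (1 - la) powr (real (n - 1) * log 2 (real n))"
    using lam n2 by (simp add: Lam_def powr_power_nonneg)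
  have "n > 0" using n2 by simp
  have noiseless: "h_lossy U n model 0 Lam = (1 - Lam) ^ (n - 1) * h_lossless U n model 0"
    unfolding n_def U_def by (rule h_lossy_noiseless[OF radix_pos refl refl])
  show ?thesis
    using h_lossy_ge_h_lossless[OF \<open>n > 0\<close> Lam eps] noiseless unfolding loss by simp
qed

end
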